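(* Let $p\ge5$ be a prime and $n,k\in\mathbb{N}$ with $n>k$. Then \[ \sum_{j=1}^{p-1}\binom{np}{kp+j}^2\binom{2kp+2j}{kp+j}\binom{2np-2kp-2j}{np-kp-j}\equiv 8p^3B_{p-3}\,n(n-k)^2\binom{n}{k}^2\binom{2k}{k}\binom{2n-2k-2}{n-k-1}\pmod{p^4}. \]
   Context: The Bernoulli numbers $B_m$ are defined by $\frac{z}{e^z-1}=\sum_{m\ge0}B_m\frac{z^m}{m!}$. For rationals $a,b$, $a\equiv b\pmod{p^m}$ means $(a-b)/p^m$ is a rational number whose denominator is not divisible by $p$. *)

theory Defs
  imports Complex_Main "HOL-Computational_Algebra.Primes"
begin

text \<open>Bernoulli numbers with z/(e^z-1) = sum B_m z^m/m!, i.e. B_0 = 1 and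
  sum_{k<=m} (m+1 choose k) B_k = 0 for m >= 1 (so B_1 = -1/2).\<close>
fun bernoulli :: "nat \<Rightarrow> rat" where
  "bernoulli m = (if m = 0 then 1 else
     - (\<Sum>k\<in>{..<m}. of_nat ((m + 1) choose k) * bernoulli k) / of_nat (m + 1))"

declare bernoulli.simps [simp del]

definition rat_cong :: "rat \<Rightarrow> rat \<Rightarrow> nat \<Rightarrow> nat \<Rightarrow> bool" where
  "rat_cong a b p m \<longleftrightarrow>
     \<not> int p dvd snd (quotient_of ((a - b) / of_nat (p ^ m)))"

end

theory Submission
  imports Defs "HOL-Number_Theory.Number_Theory"
begin

text \<open>
  Pair the summands \<open>j\<close> and \<open>p - j\<close> for \<open>1 \<le> j \<le> (p - 1) / 2\<close>. Writing
  \<open>N! = p^(N div p) (N div p)! R(N)\<close>, where \<open>R(N)\<close> is the product of the numbers up to \<open>N\<close>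
  prime to \<open>p\<close> and \<open>R(N) \<equiv> (-1)^(N div p) (N mod p)!\<close> by Wilson's theorem, each binomial
  coefficient of a summand is known modulo \<open>p\<close> after removing its power of \<open>p\<close>. Every summand
  is divisible by \<open>p^3\<close>, and modulo \<open>p^4\<close> the pair \<open>j, p - j\<close> contributes
  \<open>-4 p^3 n (n-k)^2 C(n,k)^2 C(2k,k) C(2n-2k-2,n-k-1) j^(p-4)\<close>. It remains to see that
  \<open>\<Sum>j\<le>(p-1)/2. j^(p-4) \<equiv> -2 B_(p-3) (mod p)\<close>: this follows from
  \<open>\<Sum>j<p. j^e \<equiv> p B_e (mod p^2)\<close> by splitting the power sum into halves in two ways,
  via \<open>j \<leftrightarrow> p - j\<close> and via even and odd \<open>j\<close>.
\<close>

section \<open>\<open>p\<close>-integral rationals and congruences\<close>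

definition p_integral :: "nat \<Rightarrow> rat \<Rightarrow> bool" where
  "p_integral p x \<longleftrightarrow> (\<exists>a b::int. \<not> int p dvd b \<and> x = of_int a / of_int b)"

definition p_unit :: "nat \<Rightarrow> rat \<Rightarrow> bool" where
  "p_unit p x \<longleftrightarrow> (\<exists>a b::int. \<not> int p dvd a \<and> \<not> int p dvd b \<and> x = of_int a / of_int b)"

lemma p_integral_iff_denom:
  "p_integral p x \<longleftrightarrow> \<not> int p dvd snd (quotient_of x)"
proof -
  obtain c d where qd: "quotient_of x = (c, d)" by (cases "quotient_of x") auto
  have xcd: "x = of_int c / of_int d" using quotient_of_div[OF qd] .
  have d0: "d > 0" using quotient_of_denom_pos[OF qd] .
  have cop: "coprime c d" using quotient_of_coprime[OF qd] .
  have "p_integral p x \<longleftrightarrow> \<not> int p dvd d"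
  proof
    assume "p_integral p x"
    then obtain a b where ab: "\<not> int p dvd b" "x = of_int a / of_int b"
      unfolding p_integral_def by blast
    then have "b \<noteq> 0" by auto
    with ab xcd d0 have "c * b = a * d"
      by (simp add: field_simps flip: of_int_mult of_int_eq_iff)
    then have "d dvd b"
      using cop by (metis coprime_commute coprime_dvd_mult_right_iff dvd_triv_right)
    then show "\<not> int p dvd d" using ab(1) dvd_trans by blast
  qed (use xcd in \<open>auto simp: p_integral_def\<close>)
  then show ?thesis by (simp add: qd)
qed

lemma p_unit_nonzero: "p_unit p x \<Longrightarrow> x \<noteq> 0"
  unfolding p_unit_def by fastforce

lemma rat_cong_iff_p_integral:
  "rat_cong a b p m \<longleftrightarrow> p_integral p ((a - b) / of_nat (p ^ m))"
  by (simp add: rat_cong_def p_integral_iff_denom)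

context
  fixes p :: nat
  assumes prime_p: "prime p"
begin

lemma not_prime_dvd_one: "\<not> int p dvd 1"
  using prime_gt_1_nat[OF prime_p] by simp

lemma p_integral_of_int [simp]: "p_integral p (of_int a)"
  unfolding p_integral_def using not_prime_dvd_one by (intro exI[of _ a] exI[of _ 1]) simp

lemma p_integral_of_nat [simp]: "p_integral p (of_nat a)"
  using p_integral_of_int[of "int a"] by simp

lemma p_integral_numeral [simp]: "p_integral p (numeral a)"
  using p_integral_of_nat[of "numeral a"] by simp

lemma p_integral_neg_numeral [simp]: "p_integral p (- numeral a)"
  using p_integral_of_int[of "- numeral a"] by simp

lemma p_integral_fact [simp]: "p_integral p (fact m)"
  using p_integral_of_nat[of "fact m"] by simp

lemma p_integral_0 [simp]: "p_integral p 0" and p_integral_1 [simp]: "p_integral p 1"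
  using p_integral_of_nat[of 0] p_integral_of_nat[of 1] by simp_all

lemma p_integral_add: "p_integral p x \<Longrightarrow> p_integral p y \<Longrightarrow> p_integral p (x + y)"
proof -
  assume "p_integral p x" "p_integral p y"
  then obtain a b c d where h: "\<not> int p dvd b" "x = of_int a / of_int b"
    "\<not> int p dvd d" "y = of_int c / of_int d" unfolding p_integral_def by blast
  moreover have "b \<noteq> 0" "d \<noteq> 0" using h by auto
  ultimately have "x + y = of_int (a * d + c * b) / of_int (b * d)"
    by (simp add: field_simps)
  moreover have "\<not> int p dvd b * d" using h prime_p by (simp add: prime_dvd_mult_iff)
  ultimately show ?thesis unfolding p_integral_def by blast
qed

lemma p_integral_mult: "p_integral p x \<Longrightarrow> p_integral p y \<Longrightarrow> p_integral p (x * y)"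
proof -
  assume "p_integral p x" "p_integral p y"
  then obtain a b c d where h: "\<not> int p dvd b" "x = of_int a / of_int b"
    "\<not> int p dvd d" "y = of_int c / of_int d" unfolding p_integral_def by blast
  then have "x * y = of_int (a * c) / of_int (b * d)" by simp
  moreover have "\<not> int p dvd b * d" using h prime_p by (simp add: prime_dvd_mult_iff)
  ultimately show ?thesis unfolding p_integral_def by blast
qed

lemma p_integral_uminus: "p_integral p x \<Longrightarrow> p_integral p (- x)"
  using p_integral_mult[of "-1" x] p_integral_of_int[of "-1"] by simp

lemma p_integral_diff: "p_integral p x \<Longrightarrow> p_integral p y \<Longrightarrow> p_integral p (x - y)"
  using p_integral_add[of x "- y"] p_integral_uminus[of y] by simp

lemma p_integral_sum: "(\<And>i. i \<in> A \<Longrightarrow> p_integral p (f i)) \<Longrightarrow> p_integral p (sum f A)"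
  by (induction A rule: infinite_finite_induct) (simp_all add: p_integral_add)

lemma p_integral_power: "p_integral p x \<Longrightarrow> p_integral p (x ^ n)"
  by (induction n) (simp_all add: p_integral_mult)

lemma p_unit_imp_p_integral: "p_unit p x \<Longrightarrow> p_integral p x"
  unfolding p_unit_def p_integral_def by blast

lemma p_unit_inverse: "p_unit p x \<Longrightarrow> p_unit p (1 / x)"
  unfolding p_unit_def by (metis divide_divide_eq_right mult_1)

lemma p_unit_mult: "p_unit p x \<Longrightarrow> p_unit p y \<Longrightarrow> p_unit p (x * y)"
proof -
  assume "p_unit p x" "p_unit p y"
  then obtain a b c d where h: "\<not> int p dvd a" "\<not> int p dvd b" "x = of_int a / of_int b"
    "\<not> int p dvd c" "\<not> int p dvd d" "y = of_int c / of_int d" unfolding p_unit_def by blast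
  then have "x * y = of_int (a * c) / of_int (b * d)" by simp
  moreover have "\<not> int p dvd a * c" "\<not> int p dvd b * d"
    using h prime_p by (simp_all add: prime_dvd_mult_iff)
  ultimately show ?thesis unfolding p_unit_def by blast
qed

lemma p_integral_divide: "p_integral p x \<Longrightarrow> p_unit p y \<Longrightarrow> p_integral p (x / y)"
  using p_integral_mult[of x "1 / y"] p_unit_inverse p_unit_imp_p_integral by simp

lemma p_unit_of_int: "\<not> int p dvd a \<Longrightarrow> p_unit p (of_int a)"
  unfolding p_unit_def using not_prime_dvd_one by (intro exI[of _ a] exI[of _ 1]) simp

lemma p_unit_of_nat: "\<not> p dvd a \<Longrightarrow> p_unit p (of_nat a)"
  using p_unit_of_int[of "int a"] by simp

lemma p_unit_of_nat_less: "0 < m \<Longrightarrow> m < p \<Longrightarrow> p_unit p (of_nat m)"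
  by (rule p_unit_of_nat) (auto dest: dvd_imp_le)

lemma p_unit_power: "p_unit p x \<Longrightarrow> p_unit p (x ^ n)"
  using p_unit_of_nat[of 1] prime_p by (induction n) (auto simp: prime_nat_iff intro: p_unit_mult)

lemma p_unit_fact: "m < p \<Longrightarrow> p_unit p (fact m)"
  using p_unit_of_nat[of "fact m"] prime_dvd_fact_iff[OF prime_p, of m] by simp

lemma p_unit_minus_one_power: "p_unit p ((-1) ^ n)"
  using p_unit_of_int[of "-1"] prime_p by (auto simp: prime_nat_iff intro: p_unit_power)

lemmas p_integral_intros = p_integral_of_nat p_integral_fact p_integral_neg_numeral
  p_integral_mult p_integral_uminus p_integral_power p_integral_divide p_unit_mult p_unit_power p_unit_fact

lemma rat_cong_refl [simp]: "rat_cong x x p k"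
  by (simp add: rat_cong_iff_p_integral)

lemma rat_cong_sym: "rat_cong x y p k \<Longrightarrow> rat_cong y x p k"
  unfolding rat_cong_iff_p_integral
  using p_integral_uminus[of "(x - y) / of_nat (p ^ k)"] by (simp add: minus_divide_left)

lemma rat_cong_trans: "rat_cong x y p k \<Longrightarrow> rat_cong y z p k \<Longrightarrow> rat_cong x z p k"
  unfolding rat_cong_iff_p_integral
  using p_integral_add[of "(x - y) / of_nat (p ^ k)" "(y - z) / of_nat (p ^ k)"]
  by (simp add: add_divide_distrib[symmetric])

lemma rat_cong_add: "rat_cong x y p k \<Longrightarrow> rat_cong u v p k \<Longrightarrow> rat_cong (x + u) (y + v) p k"
  unfolding rat_cong_iff_p_integral
  using p_integral_add[of "(x - y) / of_nat (p ^ k)" "(u - v) / of_nat (p ^ k)"]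
  by (simp add: add_divide_distrib[symmetric] algebra_simps)

lemma rat_cong_uminus: "rat_cong x y p k \<Longrightarrow> rat_cong (- x) (- y) p k"
  unfolding rat_cong_iff_p_integral
  using p_integral_uminus[of "(x - y) / of_nat (p ^ k)"] by (simp add: minus_divide_left)

lemma rat_cong_diff: "rat_cong x y p k \<Longrightarrow> rat_cong u v p k \<Longrightarrow> rat_cong (x - u) (y - v) p k"
  using rat_cong_add[of x y k "- u" "- v"] rat_cong_uminus by simp

lemma rat_cong_sum:
  "(\<And>i. i \<in> A \<Longrightarrow> rat_cong (f i) (g i) p k) \<Longrightarrow> rat_cong (sum f A) (sum g A) p k"
  by (induction A rule: infinite_finite_induct) (auto intro: rat_cong_add)

lemma rat_cong_mult_left: "rat_cong x y p k \<Longrightarrow> p_integral p c \<Longrightarrow> rat_cong (c * x) (c * y) p k"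
  unfolding rat_cong_iff_p_integral
  using p_integral_mult[of c "(x - y) / of_nat (p ^ k)"] by (simp add: algebra_simps)

lemma rat_cong_p_integral: "rat_cong x y p k \<Longrightarrow> p_integral p y \<Longrightarrow> p_integral p x"
proof -
  assume "rat_cong x y p k" "p_integral p y"
  then have "p_integral p (y + of_nat (p ^ k) * ((x - y) / of_nat (p ^ k)))"
    unfolding rat_cong_iff_p_integral by (intro p_integral_add p_integral_mult p_integral_of_nat)
  then show ?thesis using prime_gt_0_nat[OF prime_p] by simp
qed

lemma rat_cong_mult:
  assumes "rat_cong x y p k" "rat_cong u v p k" "p_integral p y" "p_integral p v"
  shows "rat_cong (x * u) (y * v) p k"
proof -
  have "p_integral p x" using assms(1,3) by (rule rat_cong_p_integral)
  with assms(2) have "rat_cong (x * u) (x * v) p k" by (rule rat_cong_mult_left)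
  moreover have "rat_cong (v * x) (v * y) p k" using assms(1,4) by (rule rat_cong_mult_left)
  then have "rat_cong (x * v) (y * v) p k" by (simp only: mult.commute)
  ultimately show ?thesis by (rule rat_cong_trans)
qed

lemma rat_cong_power: "rat_cong x y p k \<Longrightarrow> p_integral p y \<Longrightarrow> rat_cong (x ^ n) (y ^ n) p k"
  by (induction n) (simp_all add: rat_cong_mult p_integral_power)

lemma rat_cong_inverse:
  assumes "rat_cong x y p k" "p_unit p x" "p_unit p y"
  shows "rat_cong (1 / x) (1 / y) p k"
proof -
  have "x \<noteq> 0" "y \<noteq> 0" using assms(2,3) by (simp_all add: p_unit_nonzero)
  then have "(1 / x - 1 / y) / of_nat (p ^ k) = (y - x) / of_nat (p ^ k) * (1 / x) * (1 / y)"
    by (simp add: field_simps)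
  moreover have "p_integral p ((y - x) / of_nat (p ^ k) * (1 / x) * (1 / y))"
    using rat_cong_sym[OF assms(1)] assms(2,3)
    by (intro p_integral_mult p_unit_imp_p_integral[OF p_unit_inverse])
       (auto simp: rat_cong_iff_p_integral)
  ultimately show ?thesis unfolding rat_cong_iff_p_integral by simp
qed

lemma rat_cong_of_int: "[a = b] (mod int p ^ k) \<Longrightarrow> rat_cong (of_int a) (of_int b) p k"
proof -
  assume "[a = b] (mod int p ^ k)"
  then obtain t where "a - b = int p ^ k * t" by (metis cong_iff_dvd_diff dvdE)
  then have "(of_int a - of_int b) / of_nat (p ^ k) = (of_int t :: rat)"
    using prime_gt_0_nat[OF prime_p] by (simp add: field_simps flip: of_int_diff)
  then show ?thesis unfolding rat_cong_iff_p_integral by simp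
qed

lemma rat_cong_mult_p_power_iff:
  "rat_cong (of_nat p ^ l * x) (of_nat p ^ l * y) p (k + l) \<longleftrightarrow> rat_cong x y p k"
proof -
  have "(of_nat p ^ l * x - of_nat p ^ l * y) / of_nat (p ^ (k + l)) = (x - y) / of_nat (p ^ k)"
    using prime_gt_0_nat[OF prime_p] by (simp add: field_simps power_add)
  then show ?thesis unfolding rat_cong_iff_p_integral by simp
qed

lemma rat_cong_mult_p_power:
  "rat_cong x y p k \<Longrightarrow> m = k + l \<Longrightarrow> rat_cong (of_nat p ^ l * x) (of_nat p ^ l * y) p m"
  by (simp add: rat_cong_mult_p_power_iff)

lemma rat_cong_cancel_p_power:
  "rat_cong (of_nat p ^ l * x) (of_nat p ^ l * y) p m \<Longrightarrow> m = k + l \<Longrightarrow> rat_cong x y p k"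
  by (simp add: rat_cong_mult_p_power_iff)

lemma rat_cong_cancel_unit:
  assumes "rat_cong (c * x) (c * y) p k" "p_unit p c"
  shows "rat_cong x y p k"
proof -
  have "rat_cong (1 / c * (c * x)) (1 / c * (c * y)) p k"
    by (rule rat_cong_mult_left[OF assms(1)]) (intro p_unit_imp_p_integral p_unit_inverse assms(2))
  moreover have "1 / c * (c * z) = z" for z
    using p_unit_nonzero[OF assms(2)] by simp
  ultimately show ?thesis by simp
qed

lemma rat_cong_0_iff: "rat_cong x 0 p k \<longleftrightarrow> p_integral p (x / of_nat p ^ k)"
  by (simp add: rat_cong_iff_p_integral)

lemma rat_cong_divide:
  assumes "rat_cong x y p k" "rat_cong u v p k" "p_integral p y" "p_unit p u" "p_unit p v"
  shows "rat_cong (x / u) (y / v) p k"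
  using rat_cong_mult[OF assms(1) rat_cong_inverse[OF assms(2,4,5)] assms(3)]
    p_unit_imp_p_integral[OF p_unit_inverse[OF assms(5)]]
  by simp

lemma rat_cong_divide_of_int:
  assumes "[a = b * d] (mod int p ^ k)" "\<not> int p dvd d"
  shows "rat_cong (of_int a / of_int d) (of_int b) p k"
proof -
  have "rat_cong (of_int a) (of_int (b * d)) p k" by (rule rat_cong_of_int[OF assms(1)])
  then have "rat_cong (of_int a / of_int d) (of_int (b * d) / of_int d) p k"
    using assms by (intro rat_cong_divide rat_cong_refl p_unit_of_int)
      (simp_all add: p_integral_mult)
  moreover have "d \<noteq> 0" using assms(2) by auto
  ultimately show ?thesis by simp
qed

end

section \<open>Power sums and Bernoulli numbers\<close>

lemma power_sum_binomial:
  "N ^ Suc e = (\<Sum>i\<le>e. (Suc e choose i) * (\<Sum>j<N. j ^ i))"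
proof (induction N)
  case (Suc N)
  have "(\<Sum>i\<le>e. (Suc e choose i) * (\<Sum>j<Suc N. j ^ i))
      = N ^ Suc e + (\<Sum>i\<le>e. (Suc e choose i) * N ^ i)"
    by (simp add: sum.distrib algebra_simps flip: Suc.IH)
  also have "\<dots> = (\<Sum>i\<le>Suc e. (Suc e choose i) * N ^ i)"
    by simp
  also have "\<dots> = (N + 1) ^ Suc e"
    using binomial_ring[of N 1 "Suc e"] by simp
  finally show ?case by simp
qed simp

lemma bernoulli_0 [simp]: "bernoulli 0 = 1"
  by (simp add: bernoulli.simps)

lemma bernoulli_recurrence:
  "m \<ge> 1 \<Longrightarrow> (\<Sum>k<m. of_nat ((m + 1) choose k) * bernoulli k) = - of_nat (m + 1) * bernoulli m"
  by (subst (2) bernoulli.simps) (simp del: of_nat_Suc)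

context
  fixes p :: nat
  assumes prime_p: "prime p"
begin

lemma p_integral_bernoulli: "m + 2 \<le> p \<Longrightarrow> p_integral p (bernoulli m)"
proof (induction m rule: less_induct)
  case (less m)
  show ?case
  proof (cases "m = 0")
    case False
    then have "bernoulli m = - (\<Sum>k<m. of_nat ((m + 1) choose k) * bernoulli k) / of_nat (m + 1)"
      by (simp add: bernoulli.simps)
    also have "p_integral p \<dots>"
      using less prime_p p_unit_of_nat_less[OF prime_p, of "m + 1"]
      by (intro p_integral_divide p_integral_uminus p_integral_sum p_integral_mult) auto
    finally show ?thesis .
  qed (simp add: prime_p)
qed

text \<open>The power sums and \<open>p B_e\<close> obey the same binomial recurrence modulo \<open>p^2\<close>,
  up to the term \<open>p^(e+1)\<close>.\<close>

lemma power_sum_cong_bernoulli: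
  "e + 2 \<le> p \<Longrightarrow> rat_cong (of_nat (\<Sum>j<p. j ^ e)) (of_nat p * bernoulli e) p 2"
proof (induction e rule: less_induct)
  case (less e)
  show ?case
  proof (cases "e = 0")
    case False
    define S where "S i = (of_nat (\<Sum>j<p. j ^ i) :: rat)" for i
    have "of_nat p ^ Suc e = (\<Sum>i<e. of_nat (Suc e choose i) * S i) + of_nat (Suc e) * S e"
      using arg_cong[OF power_sum_binomial[of p e], of "of_nat :: nat \<Rightarrow> rat"]
      by (simp add: S_def lessThan_Suc_atMost[symmetric] algebra_simps)
    then have "of_nat (Suc e) * S e = of_nat p ^ Suc e - (\<Sum>i<e. of_nat (Suc e choose i) * S i)"
      by simp
    also have "rat_cong \<dots> (0 - (\<Sum>i<e. of_nat (Suc e choose i) * (of_nat p * bernoulli i))) p 2"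
    proof (rule rat_cong_diff[OF prime_p])
      have "of_nat p ^ Suc e = of_nat p ^ 2 * (of_nat p ^ (e - 1) :: rat)"
        using False by (simp flip: power_add)
      then have "of_nat p ^ Suc e / of_nat p ^ 2 = (of_nat p ^ (e - 1) :: rat)"
        using prime_gt_0_nat[OF prime_p] by simp
      then show "rat_cong (of_nat p ^ Suc e) 0 p 2"
        using prime_p by (simp add: rat_cong_0_iff p_integral_power)
      show "rat_cong (\<Sum>i<e. of_nat (Suc e choose i) * S i)
          (\<Sum>i<e. of_nat (Suc e choose i) * (of_nat p * bernoulli i)) p 2"
        using less by (intro rat_cong_sum[OF prime_p] rat_cong_mult_left[OF prime_p])
          (auto simp: S_def prime_p)
    qed
    also have "0 - (\<Sum>i<e. of_nat (Suc e choose i) * (of_nat p * bernoulli i))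
        = - of_nat p * (\<Sum>i<e. of_nat ((e + 1) choose i) * bernoulli i)"
      by (simp add: sum_distrib_left sum_negf algebra_simps)
    also have "\<dots> = of_nat (Suc e) * (of_nat p * bernoulli e)"
      using False by (subst bernoulli_recurrence) (simp_all add: algebra_simps)
    finally have "rat_cong (of_nat (Suc e) * S e) (of_nat (Suc e) * (of_nat p * bernoulli e)) p 2" .
    then show ?thesis
      unfolding S_def by (rule rat_cong_cancel_unit[OF prime_p], intro p_unit_of_nat_less[OF prime_p])
        (use less.prems in auto)
  qed (simp add: prime_p)
qed

end

lemma sum_upto_double_reflect:
  fixes f :: "nat \<Rightarrow> 'a::comm_monoid_add"
  shows "(\<Sum>j = 1..2 * h. f j) = (\<Sum>j = 1..h. f j + f (2 * h + 1 - j))"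
proof -
  have "(\<Sum>j = 1..2 * h. f j) = (\<Sum>j = 1..h. f j) + (\<Sum>j = h + 1..2 * h. f j)"
    by (subst sum.union_disjoint[symmetric]) (auto intro: sum.cong)
  also have "(\<Sum>j = h + 1..2 * h. f j) = (\<Sum>j = 1..h. f (2 * h + 1 - j))"
    by (rule sum.reindex_bij_witness[where i="\<lambda>j. 2 * h + 1 - j" and j="\<lambda>j. 2 * h + 1 - j"])
      auto
  finally show ?thesis by (simp add: sum.distrib)
qed

lemma sum_upto_double_even_odd:
  fixes f :: "nat \<Rightarrow> 'a::comm_monoid_add"
  shows "(\<Sum>j = 1..2 * h. f j) = (\<Sum>j = 1..h. f (2 * j) + f (2 * h + 1 - 2 * j))"
proof -
  have "(\<Sum>j = 1..2 * h. f j) = sum f {j \<in> {1..2 * h}. even j} + sum f {j \<in> {1..2 * h}. odd j}"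
    by (subst sum.union_disjoint[symmetric]) (auto intro: sum.cong)
  also have "sum f {j \<in> {1..2 * h}. even j} = (\<Sum>j = 1..h. f (2 * j))"
    by (rule sum.reindex_bij_witness[where i="\<lambda>j. 2 * j" and j="\<lambda>j. j div 2"]) auto
  also have "sum f {j \<in> {1..2 * h}. odd j} = (\<Sum>j = 1..h. f (2 * h + 1 - 2 * j))"
    by (rule sum.reindex_bij_witness[where i="\<lambda>j. 2 * h + 1 - 2 * j" and j="\<lambda>j. h - j div 2"])
      (auto elim!: oddE simp: right_diff_distrib')
  finally show ?thesis by (simp add: sum.distrib)
qed

lemma power_diff_cong_mod_square:
  fixes a q :: int
  shows "[(a - q) ^ Suc e = a ^ Suc e - int (Suc e) * q * a ^ e] (mod q ^ 2)"
proof (induction e)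
  case (Suc e)
  have "[(a - q) ^ Suc (Suc e) = (a - q) * (a ^ Suc e - int (Suc e) * q * a ^ e)] (mod q ^ 2)"
    using cong_mult[OF cong_refl Suc.IH] by simp
  also have "(a - q) * (a ^ Suc e - int (Suc e) * q * a ^ e)
      = a ^ Suc (Suc e) - int (Suc (Suc e)) * q * a ^ Suc e + q ^ 2 * (int (Suc e) * a ^ e)"
    by (simp add: algebra_simps power2_eq_square)
  also have "[\<dots> = a ^ Suc (Suc e) - int (Suc (Suc e)) * q * a ^ Suc e] (mod q ^ 2)"
    by (simp add: cong_iff_dvd_diff)
  finally show ?case .
qed simp

lemma sum_reflected_powers_cong:
  fixes q :: int and a :: "nat \<Rightarrow> int"
  assumes "even e"
  shows "[(\<Sum>j\<in>A. a j ^ e + (q - a j) ^ e)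
    = 2 * (\<Sum>j\<in>A. a j ^ e) - int e * q * (\<Sum>j\<in>A. a j ^ (e - 1))] (mod q ^ 2)"
proof (cases e)
  case (Suc e')
  have "[(\<Sum>j\<in>A. a j ^ e + (q - a j) ^ e)
      = (\<Sum>j\<in>A. a j ^ e + (a j ^ e - int e * q * a j ^ (e - 1)))] (mod q ^ 2)"
  proof (rule cong_sum)
    fix j
    have "(q - a j) ^ e = (a j - q) ^ e"
      using assms by (metis minus_diff_eq power_minus_even)
    then have "[(q - a j) ^ e = a j ^ e - int e * q * a j ^ (e - 1)] (mod q ^ 2)"
      using power_diff_cong_mod_square[of "a j" q e'] Suc by simp
    then show "[a j ^ e + (q - a j) ^ e = a j ^ e + (a j ^ e - int e * q * a j ^ (e - 1))] (mod q ^ 2)"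
      by (rule cong_add[OF cong_refl])
  qed
  then show ?thesis
    by (simp add: sum.distrib sum_subtractf sum_distrib_left)
qed (simp add: mult.commute)

text \<open>Pair \<open>j\<close> with \<open>p - j\<close>, and also \<open>2j\<close> with \<open>p - 2j\<close>; eliminating the half sum of
  \<open>e\<close>-th powers from the two resulting congruences leaves the \<open>(e-1)\<close>-th powers.\<close>

lemma power_sum_halves_cong:
  assumes "p = 2 * h + 1" "even e" "e > 0"
  shows "[(2 ^ e - 1) * (\<Sum>j = 1..2 * h. int j ^ e)
    = - (int e * 2 ^ (e - 1) * int p * (\<Sum>j = 1..h. int j ^ (e - 1)))] (mod int p ^ 2)"
proof -
  define S where "S = (\<Sum>j = 1..2 * h. int j ^ e)"
  define H where "H i = (\<Sum>j = 1..h. int j ^ i)" for i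
  have "S = (\<Sum>j = 1..h. int j ^ e + (int p - int j) ^ e)"
    unfolding S_def sum_upto_double_reflect using assms(1) by (intro sum.cong) auto
  also have "[\<dots> = 2 * H e - int e * int p * H (e - 1)] (mod int p ^ 2)"
    unfolding H_def by (rule sum_reflected_powers_cong[OF assms(2)])
  finally have reflect: "[S = 2 * H e - int e * int p * H (e - 1)] (mod int p ^ 2)" .
  have "S = (\<Sum>j = 1..h. int (2 * j) ^ e + (int p - int (2 * j)) ^ e)"
    unfolding S_def sum_upto_double_even_odd using assms(1) by (intro sum.cong) auto
  also have "[\<dots> = 2 * (\<Sum>j = 1..h. int (2 * j) ^ e)
      - int e * int p * (\<Sum>j = 1..h. int (2 * j) ^ (e - 1))] (mod int p ^ 2)"
    by (rule sum_reflected_powers_cong[OF assms(2)])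
  also have "2 * (\<Sum>j = 1..h. int (2 * j) ^ e) - int e * int p * (\<Sum>j = 1..h. int (2 * j) ^ (e - 1))
      = 2 * 2 ^ e * H e - int e * int p * 2 ^ (e - 1) * H (e - 1)"
    by (simp add: H_def sum_distrib_left algebra_simps)
  finally have even_odd: "[S = 2 * 2 ^ e * H e - int e * int p * 2 ^ (e - 1) * H (e - 1)] (mod int p ^ 2)" .
  have "[2 ^ e * S - S = 2 ^ e * (2 * H e - int e * int p * H (e - 1))
      - (2 * 2 ^ e * H e - int e * int p * 2 ^ (e - 1) * H (e - 1))] (mod int p ^ 2)"
    by (intro cong_diff cong_mult cong_refl reflect even_odd)
  moreover have "(2 :: int) ^ e = 2 * 2 ^ (e - 1)"
    using assms(3) by (simp flip: power_Suc)
  ultimately show ?thesis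
    unfolding S_def H_def by (simp add: algebra_simps)
qed

lemma two_power_p_minus_3_cong:
  assumes "prime p" "p \<ge> 5"
  shows "[8 * (2 ^ (p - 3) - 1) = (- 6 :: int)] (mod int p)"
    and "[8 * (int (p - 3) * 2 ^ (p - 4)) = (- 3 :: int)] (mod int p)"
proof -
  have "\<not> p dvd 2" using assms by (auto dest: dvd_imp_le)
  then have "[2 ^ (p - 1) = 1] (mod p)" by (rule fermat_theorem[OF assms(1)])
  then have fermat: "[2 ^ (p - 1) = 1] (mod int p)"
    by (metis cong_int_iff of_nat_1 of_nat_numeral of_nat_power)
  have "p - 1 = Suc (Suc (p - 3))" "p - 1 = Suc (Suc (Suc (p - 4)))" using assms(2) by auto
  then have pow: "8 * (2 ^ (p - 3) - 1) = 2 * 2 ^ (p - 1) - (8 :: int)"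
    "8 * (int (p - 3) * 2 ^ (p - 4)) = (int p - 3) * (2 :: int) ^ (p - 1)"
    using assms(2) by (simp_all add: algebra_simps)
  have "[2 * 2 ^ (p - 1) - 8 = 2 * 1 - (8 :: int)] (mod int p)"
    by (intro cong_diff cong_mult cong_refl fermat)
  then show "[8 * (2 ^ (p - 3) - 1) = (- 6 :: int)] (mod int p)"
    unfolding pow by simp
  have "[(int p - 3) * 2 ^ (p - 1) = (0 - 3) * (1 :: int)] (mod int p)"
    by (intro cong_mult cong_diff fermat cong_refl) (simp add: cong_def)
  then show "[8 * (int (p - 3) * 2 ^ (p - 4)) = (- 3 :: int)] (mod int p)"
    unfolding pow by simp
qed

context
  fixes p :: nat
  assumes prime_p: "prime p"
begin

lemma bernoulli_power_sum_half_cong: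
  assumes ph: "p = 2 * h + 1" and e: "even e" "0 < e" "e + 2 \<le> p"
  shows "rat_cong ((2 ^ e - 1) * bernoulli e)
    (- (of_nat e * 2 ^ (e - 1) * of_nat (\<Sum>j = 1..h. j ^ (e - 1)))) p 1"
proof -
  note [trans] = rat_cong_trans[OF prime_p]
  define S where "S = (\<Sum>j = 1..2 * h. j ^ e)"
  define H where "H = (\<Sum>j = 1..h. j ^ (e - 1))"
  have "{..<p} = insert 0 {1..2 * h}" using ph by auto
  then have "(\<Sum>j<p. j ^ e) = S" using e(2) by (simp add: S_def)
  then have "rat_cong (of_nat S) (of_nat p * bernoulli e) p 2"
    using power_sum_cong_bernoulli[OF prime_p e(3)] by simp
  then have "rat_cong ((2 ^ e - 1) * of_nat S) ((2 ^ e - 1) * (of_nat p * bernoulli e)) p 2"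
    by (rule rat_cong_mult_left[OF prime_p]) (simp add: prime_p p_integral_diff p_integral_power)
  from rat_cong_sym[OF prime_p this]
  have "rat_cong ((2 ^ e - 1) * (of_nat p * bernoulli e)) ((2 ^ e - 1) * of_nat S) p 2" .
  also have "rat_cong ((2 ^ e - 1) * of_nat S) (of_nat p * (- (of_nat e * 2 ^ (e - 1) * of_nat H))) p 2"
    using rat_cong_of_int[OF prime_p power_sum_halves_cong[OF ph e(1,2)]]
    by (simp add: S_def H_def algebra_simps)
  finally have "rat_cong (of_nat p ^ 1 * ((2 ^ e - 1) * bernoulli e))
      (of_nat p ^ 1 * (- (of_nat e * 2 ^ (e - 1) * of_nat H))) p 2"
    by (simp add: mult.left_commute)
  then show ?thesis
    unfolding H_def by (rule rat_cong_cancel_p_power[OF prime_p]) simp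
qed

lemma bernoulli_p_minus_3_cong:
  assumes p5: "p \<ge> 5" and ph: "p = 2 * h + 1"
  shows "rat_cong (8 * bernoulli (p - 3)) (- 4 * of_nat (\<Sum>j = 1..h. j ^ (p - 4))) p 1"
proof -
  note [trans] = rat_cong_trans[OF prime_p]
  define e where "e = p - 3"
  define B where "B = bernoulli e"
  define H where "H = (\<Sum>j = 1..h. j ^ (e - 1))"
  have "e = 2 * (h - 1)" "e > 0" "e - 1 = p - 4" using p5 ph by (simp_all add: e_def)
  then have e: "even e" "e > 0" "e - 1 = p - 4" "e + 2 \<le> p" by (simp_all add: e_def)
  have "rat_cong (of_int (8 * (2 ^ e - 1))) (of_int (- 6)) p 1"
    using two_power_p_minus_3_cong(1)[OF prime_p p5] by (intro rat_cong_of_int[OF prime_p]) (simp add: e_def)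
  then have "rat_cong (of_int (8 * (2 ^ e - 1)) * B) (of_int (- 6) * B) p 1"
    using p_integral_bernoulli[OF prime_p e(4)]
    by (intro rat_cong_mult[OF prime_p _ rat_cong_refl[OF prime_p]]) (simp_all add: prime_p B_def)
  from rat_cong_sym[OF prime_p this]
  have "rat_cong (- 6 * B) (8 * ((2 ^ e - 1) * B)) p 1" by (simp add: algebra_simps)
  also have "rat_cong (8 * ((2 ^ e - 1) * B)) (8 * (- (of_nat e * 2 ^ (e - 1) * of_nat H))) p 1"
    using bernoulli_power_sum_half_cong[OF ph e(1,2,4)] unfolding B_def H_def
    by (rule rat_cong_mult_left[OF prime_p]) (simp add: prime_p)
  also have "rat_cong (8 * (- (of_nat e * 2 ^ (e - 1) * of_nat H))) (3 * of_nat H) p 1"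
  proof -
    have "rat_cong (of_int (8 * (int e * 2 ^ (e - 1)))) (of_int (- 3)) p 1"
      using two_power_p_minus_3_cong(2)[OF prime_p p5] e(3)
      by (intro rat_cong_of_int[OF prime_p]) (simp add: e_def)
    then have "rat_cong (of_int (8 * (int e * 2 ^ (e - 1))) * (- of_nat H)) (of_int (- 3) * (- of_nat H)) p 1"
      by (rule rat_cong_mult[OF prime_p _ rat_cong_refl[OF prime_p]]) (simp_all add: prime_p p_integral_uminus)
    then show ?thesis by (simp add: algebra_simps)
  qed
  finally have "rat_cong (3 * (- 2 * B)) (3 * of_nat H) p 1" by simp
  then have "rat_cong (- 2 * B) (of_nat H) p 1"
    by (rule rat_cong_cancel_unit[OF prime_p]) (use p_unit_of_nat_less[OF prime_p, of 3] p5 in simp)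
  then have "rat_cong (- 4 * (- 2 * B)) (- 4 * of_nat H) p 1"
    by (rule rat_cong_mult_left[OF prime_p]) (simp add: prime_p)
  then show ?thesis by (simp add: B_def H_def e_def e(3))
qed

end

section \<open>Factorials and binomial coefficients modulo \<open>p\<close>\<close>

definition fact_prime_to :: "nat \<Rightarrow> nat \<Rightarrow> nat" where
  "fact_prime_to p N = \<Prod>{i \<in> {1..N}. \<not> p dvd i}"

lemma fact_prime_to_0 [simp]: "fact_prime_to p 0 = 1"
  by (simp add: fact_prime_to_def)

lemma fact_prime_to_Suc:
  "fact_prime_to p (Suc N) = (if p dvd Suc N then 1 else Suc N) * fact_prime_to p N"
proof -
  have "{i \<in> {1..Suc N}. \<not> p dvd i}
      = (if p dvd Suc N then {i \<in> {1..N}. \<not> p dvd i} else insert (Suc N) {i \<in> {1..N}. \<not> p dvd i})"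
    by (auto simp: le_Suc_eq)
  then show ?thesis by (simp add: fact_prime_to_def)
qed

lemma fact_eq_fact_prime_to:
  assumes "p > 0"
  shows "fact N = p ^ (N div p) * fact (N div p) * fact_prime_to p N"
proof (induction N)
  case (Suc N)
  show ?case
  proof (cases "p dvd Suc N")
    case True
    then have "Suc N mod p = 0" by simp
    then have div: "Suc N div p = Suc (N div p)" by (simp add: div_Suc)
    have Suc_N: "Suc N = p * Suc (N div p)"
      using \<open>Suc N mod p = 0\<close> div by (metis div_mult_mod_eq add_0_right mult.commute)
    have "fact (Suc N) = Suc N * (fact N :: nat)" by simp
    also have "\<dots> = p * Suc (N div p) * (p ^ (N div p) * fact (N div p) * fact_prime_to p N)"
      by (simp only: Suc_N Suc.IH)
    also have "\<dots> = p ^ (Suc N div p) * fact (Suc N div p) * fact_prime_to p (Suc N)"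
      using True div by (simp add: fact_prime_to_Suc algebra_simps)
    finally show ?thesis .
  next
    case False
    then have "Suc N div p = N div p" by (simp add: div_Suc dvd_eq_mod_eq_0)
    then show ?thesis using Suc.IH False by (simp add: fact_prime_to_Suc algebra_simps)
  qed
qed simp

lemma binomial_eq_fact_prime_to:
  assumes "p > 0" "(b + c) div p = b div p + c div p + e"
  shows "(of_nat ((b + c) choose b) :: rat) = of_nat p ^ e
    * (fact ((b + c) div p) / (fact (b div p) * fact (c div p)))
    * (of_nat (fact_prime_to p (b + c)) / (of_nat (fact_prime_to p b) * of_nat (fact_prime_to p c)))"
proof -
  have fact_p: "(fact N :: rat) = of_nat p ^ (N div p) * fact (N div p) * of_nat (fact_prime_to p N)" for N
    using arg_cong[OF fact_eq_fact_prime_to[OF assms(1), of N], of "of_nat :: nat \<Rightarrow> rat"] by simp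
  have "fact_prime_to p N \<noteq> 0" for N
    by (simp add: fact_prime_to_def)
  moreover have "fact b * fact c * of_nat ((b + c) choose b) = (fact (b + c) :: rat)"
    using binomial_fact_lemma[of b "b + c"] by (metis add_diff_cancel_left' le_add1 of_nat_fact of_nat_mult)
  ultimately show ?thesis
    using assms unfolding fact_p[of "b + c"] fact_p[of b] fact_p[of c]
    by (simp add: field_simps power_add)
qed

context
  fixes p :: nat
  assumes prime_p: "prime p"
begin

lemma fact_prime_to_cong:
  "[int (fact_prime_to p N) = (-1) ^ (N div p) * fact (N mod p)] (mod int p)"
proof (induction N)
  case (Suc N)
  show ?case
  proof (cases "p dvd Suc N")
    case True
    then have "Suc N mod p = 0" by simp
    then have div_mod: "Suc N div p = Suc (N div p)" "N mod p = p - 1"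
      by (simp add: div_Suc, metis mod_Suc diff_Suc_1 nat.distinct(1))
    have "int (fact_prime_to p (Suc N)) = int (fact_prime_to p N)"
      using True by (simp add: fact_prime_to_Suc)
    also have "[\<dots> = (-1) ^ (N div p) * fact (p - 1)] (mod int p)"
      using Suc.IH div_mod by simp
    also have "[(-1) ^ (N div p) * fact (p - 1) = (-1) ^ (N div p) * (-1 :: int)] (mod int p)"
      by (rule cong_mult[OF cong_refl wilson_theorem[OF prime_p]])
    also have "(-1) ^ (N div p) * (-1 :: int) = (-1) ^ (Suc N div p) * fact (Suc N mod p)"
      using div_mod \<open>Suc N mod p = 0\<close> by simp
    finally show ?thesis .
  next
    case False
    then have div_mod: "Suc N div p = N div p" "Suc N mod p = Suc (N mod p)"
      by (simp_all add: div_Suc mod_Suc dvd_eq_mod_eq_0 split: if_splits)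
    have "int (fact_prime_to p (Suc N)) = int (Suc N) * int (fact_prime_to p N)"
      using False by (simp add: fact_prime_to_Suc algebra_simps)
    also have "[\<dots> = int (Suc (N mod p)) * ((-1) ^ (N div p) * fact (N mod p))] (mod int p)"
    proof (rule cong_mult[OF _ Suc.IH])
      have "[Suc N = Suc (N mod p)] (mod p)" by (simp add: cong_def mod_Suc_eq)
      then show "[int (Suc N) = int (Suc (N mod p))] (mod int p)" by (simp only: cong_int_iff)
    qed
    also have "int (Suc (N mod p)) * ((-1) ^ (N div p) * fact (N mod p))
        = (-1) ^ (Suc N div p) * fact (Suc N mod p)"
      using div_mod by (simp add: algebra_simps)
    finally show ?thesis .
  qed
qed simp

lemma p_unit_fact_prime_to: "p_unit p (of_nat (fact_prime_to p N))"
proof (rule p_unit_of_nat[OF prime_p])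
  show "\<not> p dvd fact_prime_to p N"
    unfolding fact_prime_to_def by (subst prime_dvd_prod_iff[OF _ prime_p]) auto
qed

lemma fact_prime_to_rat_cong:
  assumes "N = q * p + r" "r < p"
  shows "rat_cong (of_nat (fact_prime_to p N)) ((-1) ^ q * fact r) p 1"
proof -
  have "N div p = q" "N mod p = r" using assms by auto
  then have "[int (fact_prime_to p N) = (-1) ^ q * fact r] (mod int p ^ 1)"
    using fact_prime_to_cong[of N] by simp
  from rat_cong_of_int[OF prime_p this] show ?thesis by simp
qed

lemma p_integral_fact_quotient:
  assumes "b + c \<le> a"
  shows "p_integral p (fact a / (fact b * fact c))"
proof -
  have "fact b * fact c dvd (fact (b + c) :: nat)"
    using binomial_fact_lemma[of b "b + c"] by (metis add_diff_cancel_left' dvd_triv_left le_add1)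
  also have "fact (b + c) dvd (fact a :: nat)" using assms by (rule fact_dvd)
  finally obtain t where "fact a = fact b * fact c * (t :: nat)" by (auto simp: dvd_def)
  then have "(fact a :: rat) / (fact b * fact c) = of_nat t"
    by (metis (mono_tags) fact_nonzero mult_eq_0_iff nonzero_mult_div_cancel_left of_nat_fact of_nat_mult)
  then show ?thesis using prime_p by simp
qed

text \<open>A one-digit form of Anton's congruence, the refinement of Lucas' theorem that allows
  a carry.\<close>

lemma binomial_div_p_power_cong:
  assumes "b = qb * p + rb" "c = qc * p + rc" "b + c = qa * p + ra" "qa = qb + qc + e"
    and "ra < p" "rb < p" "rc < p"
  shows "rat_cong (of_nat ((b + c) choose b) / of_nat p ^ e)
    ((-1) ^ e * (fact qa / (fact qb * fact qc)) * (fact ra / (fact rb * fact rc))) p 1"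
proof -
  define R where "R N = (of_nat (fact_prime_to p N) :: rat)" for N
  have div: "(b + c) div p = qa" "b div p = qb" "c div p = qc"
    and mod: "(b + c) mod p = ra" "b mod p = rb" "c mod p = rc"
    using assms(1-3,5-7) by simp_all
  have exact: "of_nat ((b + c) choose b) / of_nat p ^ e
      = fact qa / (fact qb * fact qc) * (R (b + c) / (R b * R c))"
    using binomial_eq_fact_prime_to[OF prime_gt_0_nat[OF prime_p], of b c e] prime_gt_0_nat[OF prime_p]
    unfolding R_def div assms(4) by simp
  have cong_R: "rat_cong (R N) ((-1) ^ (N div p) * fact (N mod p)) p 1" for N
    unfolding R_def by (rule fact_prime_to_rat_cong) (simp_all add: prime_gt_0_nat[OF prime_p])
  have unit: "p_unit p ((-1) ^ q * fact r)" if "r < p" for q r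
    using that by (intro p_unit_mult[OF prime_p] p_unit_minus_one_power[OF prime_p] p_unit_fact[OF prime_p])
  have "rat_cong (R b * R c) ((-1) ^ qb * fact rb * ((-1) ^ qc * fact rc)) p 1"
    using cong_R[of b] cong_R[of c] unit[of rb qb] unit[of rc qc] assms(6,7)
    by (intro rat_cong_mult[OF prime_p]) (simp_all add: div mod p_unit_imp_p_integral[OF prime_p])
  with cong_R[of "b + c"] have "rat_cong (R (b + c) / (R b * R c))
      ((-1) ^ qa * fact ra / ((-1) ^ qb * fact rb * ((-1) ^ qc * fact rc))) p 1"
    using unit[of ra qa] unit[of rb qb] unit[of rc qc] assms(5-7)
    by (intro rat_cong_divide[OF prime_p])
      (simp_all add: R_def div mod p_unit_fact_prime_to p_unit_mult[OF prime_p] p_unit_imp_p_integral[OF prime_p])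
  also have "(-1) ^ qa * fact ra / ((-1) ^ qb * fact rb * ((-1) ^ qc * fact rc))
      = (-1) ^ e * (fact ra / (fact rb * fact rc) :: rat)"
    unfolding assms(4) by (simp add: power_add field_simps)
  finally have "rat_cong (fact qa / (fact qb * fact qc) * (R (b + c) / (R b * R c)))
      (fact qa / (fact qb * fact qc) * ((-1) ^ e * (fact ra / (fact rb * fact rc)))) p 1"
    by (rule rat_cong_mult_left[OF prime_p]) (rule p_integral_fact_quotient, simp add: assms(4))
  then show ?thesis unfolding exact by (simp add: mult_ac)
qed

lemma fact_reflect_cong:
  "0 < j \<Longrightarrow> j \<le> p \<Longrightarrow> [fact (p - j) * fact (j - 1) = ((-1) ^ j :: int)] (mod int p)"
proof (induction j)
  case (Suc j)
  show ?case
  proof (cases "j = 0")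
    case True
    then show ?thesis using wilson_theorem[OF prime_p] by simp
  next
    case False
    define q where "q = p - Suc j"
    have "p - j = Suc q" "int p = int (Suc q) + int j" using Suc.prems unfolding q_def by auto
    then have "fact q * fact j - (-1) ^ Suc j
        = int p * (fact q * fact (j - 1)) - (fact (p - j) * fact (j - 1) - (-1) ^ j :: int)"
      using False by (simp add: fact_reduce[of j] algebra_simps)
    moreover have "int p dvd fact (p - j) * fact (j - 1) - (-1) ^ j"
      using Suc False by (simp add: cong_iff_dvd_diff)
    ultimately have "int p dvd fact q * fact j - (-1) ^ Suc j"
      by (metis dvd_diff dvd_triv_left)
    then show ?thesis unfolding q_def by (simp add: cong_iff_dvd_diff)
  qed
qed simp

text \<open>Both factorial products are instances of \<open>(p - i)! (i - 1)! \<equiv> (-1)^i\<close>, for \<open>i = 2j\<close>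
  and \<open>i = j\<close>.\<close>

lemma reflection_weight_int_cong:
  assumes "p \<ge> 5" "0 < j" "2 * j < p"
  shows "[fact (2 * j) * fact (p - 2 * j) = 2 * int j ^ (p - 4) * (fact j * fact (p - j)) ^ 4] (mod int p)"
proof -
  have "fact (2 * j) * fact (p - 2 * j) = int (2 * j) * (fact (p - 2 * j) * fact (2 * j - 1))"
    using assms(2) fact_reduce[of "2 * j", where 'a=int] by simp
  also have "[int (2 * j) * (fact (p - 2 * j) * fact (2 * j - 1)) = int (2 * j) * (-1) ^ (2 * j)] (mod int p)"
    using assms by (intro cong_mult cong_refl fact_reflect_cong) simp_all
  finally have numerator: "[fact (2 * j) * fact (p - 2 * j) = 2 * int j] (mod int p)" by simp
  have "(fact j * fact (p - j)) ^ 4 = (int j * (fact (p - j) * fact (j - 1))) ^ 4"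
    using assms(2) fact_reduce[of j, where 'a=int] by (simp add: algebra_simps)
  moreover have "[(int j * (fact (p - j) * fact (j - 1))) ^ 4 = (int j * (-1) ^ j) ^ 4] (mod int p)"
    using assms by (intro cong_pow cong_mult cong_refl fact_reflect_cong) simp_all
  moreover have "((-1 :: int) ^ j) ^ 4 = 1" by (cases "even j") auto
  ultimately have denominator: "[(fact j * fact (p - j)) ^ 4 = int j ^ 4] (mod int p)"
    by (simp add: power_mult_distrib mult_ac)
  have "\<not> p dvd j" using assms by (auto dest: dvd_imp_le)
  then have "[j ^ (p - 1) = 1] (mod p)" by (rule fermat_theorem[OF prime_p])
  then have fermat: "[int j ^ (p - 1) = 1] (mod int p)"
    by (metis cong_int_iff of_nat_1 of_nat_power)
  have "2 * int j ^ (p - 4) * int j ^ 4 = 2 * int j * int j ^ (p - 1)"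
    using assms(1) by (simp flip: power_add power_Suc)
  with cong_mult[OF cong_refl denominator, of "2 * int j ^ (p - 4)"]
  have "[2 * int j ^ (p - 4) * (fact j * fact (p - j)) ^ 4 = 2 * int j * int j ^ (p - 1)] (mod int p)"
    by simp
  also have "[2 * int j * int j ^ (p - 1) = 2 * int j * 1] (mod int p)"
    by (intro cong_mult cong_refl fermat)
  finally show ?thesis
    using cong_trans[OF numerator cong_sym] by simp
qed

lemma reflection_weight_cong:
  assumes "p \<ge> 5" "0 < j" "2 * j < p"
  shows "rat_cong (of_nat ((2 * j) choose j) * fact (p - 2 * j) / (fact j ^ 2 * fact (p - j) ^ 4))
    (2 * of_nat j ^ (p - 4)) p 1"
proof -
  have "\<not> p dvd fact j * fact (p - j)"
    using assms by (simp add: prime_dvd_mult_iff[OF prime_p] prime_dvd_fact_iff[OF prime_p])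
  then have "\<not> int p dvd fact j * fact (p - j)"
    by (metis int_dvd_int_iff of_nat_fact of_nat_mult)
  then have "\<not> int p dvd (fact j * fact (p - j)) ^ 4"
    using prime_dvd_power[of "int p"] prime_p by auto
  with reflection_weight_int_cong[OF assms]
  have "rat_cong (of_int (fact (2 * j) * fact (p - 2 * j)) / of_int ((fact j * fact (p - j)) ^ 4))
      (of_int (2 * int j ^ (p - 4))) p 1"
    by (intro rat_cong_divide_of_int[OF prime_p]) simp_all
  moreover have "(fact (2 * j) :: rat) = of_nat ((2 * j) choose j) * fact j ^ 2"
    using arg_cong[OF binomial_fact_lemma[of j "2 * j"], of "of_nat :: nat \<Rightarrow> rat"]
    by (simp add: power2_eq_square mult_ac)
  moreover have "(fact j :: rat) \<noteq> 0" by simp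
  ultimately show ?thesis
    by (simp add: power_mult_distrib power2_eq_square power4_eq_xxxx mult_ac)
qed

end

section \<open>The summands\<close>

definition summand :: "nat \<Rightarrow> nat \<Rightarrow> nat \<Rightarrow> nat \<Rightarrow> nat" where
  "summand p n k j = ((n * p) choose (k * p + j))^2 * ((2 * k * p + 2 * j) choose (k * p + j))
     * ((2 * n * p - 2 * k * p - 2 * j) choose (n * p - k * p - j))"

lemma central_fact_quotient:
  "(fact (2 * m) / (fact m * fact m) :: 'a :: field_char_0) = of_nat ((2 * m) choose m)"
  using binomial_fact[of m "2 * m", where 'a='a] by (simp add: mult_2)

context
  fixes p :: nat
  assumes prime_p: "prime p"
begin

lemma binomial_mult_p_cong:
  assumes "k < n" "0 < j" "j < p"
  shows "rat_cong (of_nat ((n * p) choose (k * p + j)) / of_nat p)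
    (- of_nat (n - k) * of_nat (n choose k) / (fact j * fact (p - j))) p 1"
proof -
  define m where "m = n - k - 1"
  have n: "n = k + m + 1" "n - k = Suc m" using assms(1) by (simp_all add: m_def)
  have sum: "(k * p + j) + (m * p + (p - j)) = n * p" using assms(3) n by (simp add: algebra_simps)
  have cong: "rat_cong (of_nat (((k * p + j) + (m * p + (p - j))) choose (k * p + j)) / of_nat p ^ 1)
      ((-1) ^ 1 * (fact n / (fact k * fact m)) * (fact 0 / (fact j * fact (p - j)))) p 1"
    by (rule binomial_div_p_power_cong[OF prime_p]) (use assms(2,3) n sum in simp_all)
  have "(of_nat (n - k) * of_nat (n choose k) :: rat)
      = of_nat (Suc m) * (fact n / (fact k * (of_nat (Suc m) * fact m)))"
    using binomial_fact[of k n, where 'a=rat] assms(1) n(2) by simp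
  also have "\<dots> = fact n / (fact k * fact m)"
    by (simp del: of_nat_Suc)
  finally show ?thesis using cong unfolding sum by simp
qed

lemma binomial_lucas_cong:
  assumes "2 * j < p"
  shows "rat_cong (of_nat ((2 * m * p + 2 * j) choose (m * p + j)))
    (of_nat ((2 * m) choose m) * of_nat ((2 * j) choose j)) p 1"
proof -
  have sum: "(m * p + j) + (m * p + j) = 2 * m * p + 2 * j" by simp
  have "rat_cong (of_nat (((m * p + j) + (m * p + j)) choose (m * p + j)) / of_nat p ^ 0)
      ((-1) ^ 0 * (fact (2 * m) / (fact m * fact m)) * (fact (2 * j) / (fact j * fact j))) p 1"
    by (rule binomial_div_p_power_cong[OF prime_p]) (use assms in simp_all)
  then show ?thesis unfolding sum central_fact_quotient by simp
qed

lemma binomial_carry_cong: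
  assumes "0 < j" "2 * j < p"
  shows "rat_cong (of_nat ((2 * m * p + 2 * (p - j)) choose (m * p + (p - j))) / of_nat p)
    (- of_nat (2 * m + 1) * of_nat ((2 * m) choose m) * fact (p - 2 * j) / fact (p - j) ^ 2) p 1"
proof -
  have sum: "(m * p + (p - j)) + (m * p + (p - j)) = 2 * m * p + 2 * (p - j)" by simp
  have cong: "rat_cong (of_nat (((m * p + (p - j)) + (m * p + (p - j))) choose (m * p + (p - j))) / of_nat p ^ 1)
      ((-1) ^ 1 * (fact (2 * m + 1) / (fact m * fact m))
        * (fact (p - 2 * j) / (fact (p - j) * fact (p - j)))) p 1"
    by (rule binomial_div_p_power_cong[OF prime_p]) (use assms in simp_all)
  have "(-1) ^ 1 * (fact (2 * m + 1) / (fact m * fact m))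
      * (fact (p - 2 * j) / (fact (p - j) * fact (p - j)))
    = - of_nat (2 * m + 1) * of_nat ((2 * m) choose m) * fact (p - 2 * j) / (fact (p - j) ^ 2 :: rat)"
    unfolding central_fact_quotient[symmetric] by (simp add: power2_eq_square field_simps)
  with cong show ?thesis unfolding sum by simp
qed


lemma summand_low_cong:
  assumes "n = k + m + 1" "0 < j" "2 * j < p"
  shows "rat_cong (of_nat (summand p n k j) / of_nat p ^ 3)
    (- of_nat (2 * m + 1) * ((of_nat (n - k) * of_nat (n choose k) / (fact j * fact (p - j))) ^ 2
      * of_nat ((2 * k) choose k) * of_nat ((2 * m) choose m)
      * (of_nat ((2 * j) choose j) * fact (p - 2 * j) / fact (p - j) ^ 2))) p 1"
proof -
  define C1 where "C1 = (of_nat ((n * p) choose (k * p + j)) :: rat)"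
  define C2 where "C2 = (of_nat ((2 * k * p + 2 * j) choose (k * p + j)) :: rat)"
  define C3 where "C3 = (of_nat ((2 * m * p + 2 * (p - j)) choose (m * p + (p - j))) :: rat)"
  have "2 * n * p - 2 * k * p - 2 * j = 2 * m * p + 2 * (p - j)" "n * p - k * p - j = m * p + (p - j)"
    using assms by (simp_all add: algebra_simps)
  then have "of_nat (summand p n k j) / of_nat p ^ 3 = (C1 / of_nat p) ^ 2 * C2 * (C3 / of_nat p)"
    using prime_gt_0_nat[OF prime_p]
    by (simp add: summand_def C1_def C2_def C3_def field_simps power2_eq_square power3_eq_cube)
  also have "rat_cong ((C1 / of_nat p) ^ 2 * C2 * (C3 / of_nat p))
      ((- of_nat (n - k) * of_nat (n choose k) / (fact j * fact (p - j))) ^ 2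
      * (of_nat ((2 * k) choose k) * of_nat ((2 * j) choose j))
      * (- of_nat (2 * m + 1) * of_nat ((2 * m) choose m) * fact (p - 2 * j) / fact (p - j) ^ 2)) p 1"
    unfolding C1_def C2_def C3_def using assms
    by (intro rat_cong_mult[OF prime_p] rat_cong_power[OF prime_p] binomial_mult_p_cong
        binomial_lucas_cong binomial_carry_cong p_integral_intros[OF prime_p])
      simp_all
  finally show ?thesis
    by (simp add: algebra_simps)
qed

lemma summand_high_cong:
  assumes "n = k + m + 1" "0 < j" "2 * j < p"
  shows "rat_cong (of_nat (summand p n k (p - j)) / of_nat p ^ 3)
    (- of_nat (2 * k + 1) * ((of_nat (n - k) * of_nat (n choose k) / (fact j * fact (p - j))) ^ 2
      * of_nat ((2 * k) choose k) * of_nat ((2 * m) choose m)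
      * (of_nat ((2 * j) choose j) * fact (p - 2 * j) / fact (p - j) ^ 2))) p 1"
proof -
  define C1 where "C1 = (of_nat ((n * p) choose (k * p + (p - j))) :: rat)"
  define C2 where "C2 = (of_nat ((2 * k * p + 2 * (p - j)) choose (k * p + (p - j))) :: rat)"
  define C3 where "C3 = (of_nat ((2 * m * p + 2 * j) choose (m * p + j)) :: rat)"
  have "2 * n * p - 2 * k * p - 2 * (p - j) = 2 * m * p + 2 * j" "n * p - k * p - (p - j) = m * p + j"
    using assms by (simp_all add: algebra_simps)
  then have "of_nat (summand p n k (p - j)) / of_nat p ^ 3 = (C1 / of_nat p) ^ 2 * (C2 / of_nat p) * C3"
    using prime_gt_0_nat[OF prime_p]
    by (simp add: summand_def C1_def C2_def C3_def field_simps power2_eq_square power3_eq_cube)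
  also have "rat_cong ((C1 / of_nat p) ^ 2 * (C2 / of_nat p) * C3)
      ((- of_nat (n - k) * of_nat (n choose k) / (fact (p - j) * fact (p - (p - j)))) ^ 2
      * (- of_nat (2 * k + 1) * of_nat ((2 * k) choose k) * fact (p - 2 * j) / fact (p - j) ^ 2)
      * (of_nat ((2 * m) choose m) * of_nat ((2 * j) choose j))) p 1"
    unfolding C1_def C2_def C3_def using assms
    by (intro rat_cong_mult[OF prime_p] rat_cong_power[OF prime_p] binomial_mult_p_cong
        binomial_lucas_cong binomial_carry_cong p_integral_intros[OF prime_p])
      simp_all
  also have "p - (p - j) = j" using assms by simp
  finally show ?thesis
    by (simp add: algebra_simps)
qed

text \<open>The two summands share the factor \<open>B w\<close> below, with coefficients \<open>-(2m+1)\<close> and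
  \<open>-(2k+1)\<close> adding up to \<open>-2n\<close>.\<close>

lemma summand_pair_cong:
  assumes "p \<ge> 5" "n = k + m + 1" "0 < j" "2 * j < p"
  shows "rat_cong (of_nat (summand p n k j) + of_nat (summand p n k (p - j)))
    (of_nat p ^ 3 * (- 4 * (of_nat n * of_nat (m + 1) ^ 2 * of_nat (n choose k) ^ 2
      * of_nat ((2 * k) choose k) * of_nat ((2 * m) choose m)) * of_nat j ^ (p - 4))) p 4"
proof -
  note [trans] = rat_cong_trans[OF prime_p]
  define B where "B = (of_nat (m + 1) ^ 2 * of_nat (n choose k) ^ 2
      * of_nat ((2 * k) choose k) * of_nat ((2 * m) choose m) :: rat)"
  define w where "w = (of_nat ((2 * j) choose j) * fact (p - 2 * j) / (fact j ^ 2 * fact (p - j) ^ 4) :: rat)"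
  have "(of_nat (n - k) * of_nat (n choose k) / (fact j * fact (p - j))) ^ 2
      * of_nat ((2 * k) choose k) * of_nat ((2 * m) choose m)
      * (of_nat ((2 * j) choose j) * fact (p - 2 * j) / fact (p - j) ^ 2) = B * w"
    using assms(2) by (simp add: B_def w_def field_simps power2_eq_square power4_eq_xxxx)
  then have "rat_cong (of_nat (summand p n k j) / of_nat p ^ 3 + of_nat (summand p n k (p - j)) / of_nat p ^ 3)
      (- of_nat (2 * m + 1) * (B * w) + - of_nat (2 * k + 1) * (B * w)) p 1"
    using summand_low_cong[OF assms(2-4)] summand_high_cong[OF assms(2-4)]
    by (simp add: rat_cong_add[OF prime_p])
  also have "- of_nat (2 * m + 1) * (B * w) + - of_nat (2 * k + 1) * (B * w) = - 2 * of_nat n * B * w"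
    using assms(2) by (simp add: algebra_simps)
  finally have "rat_cong ((of_nat (summand p n k j) + of_nat (summand p n k (p - j))) / of_nat p ^ 3)
      (- 2 * of_nat n * B * w) p 1"
    by (simp add: add_divide_distrib)
  also have "rat_cong (- 2 * of_nat n * B * w) (- 2 * of_nat n * B * (2 * of_nat j ^ (p - 4))) p 1"
    unfolding w_def B_def using assms
    by (intro rat_cong_mult_left[OF prime_p] reflection_weight_cong[OF prime_p]
        p_integral_intros[OF prime_p])
  finally have "rat_cong (of_nat p ^ 3 * ((of_nat (summand p n k j) + of_nat (summand p n k (p - j))) / of_nat p ^ 3))
      (of_nat p ^ 3 * (- 2 * of_nat n * B * (2 * of_nat j ^ (p - 4)))) p 4"
    by (rule rat_cong_mult_p_power[OF prime_p]) simp
  then show ?thesis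
    using prime_gt_0_nat[OF prime_p] by (simp add: B_def) (simp add: algebra_simps)
qed

lemma summand_sum_cong:
  assumes "p \<ge> 5" "p = 2 * h + 1" "n = k + m + 1"
  shows "rat_cong (of_nat (\<Sum>j = 1..p - 1. summand p n k j))
    (of_nat p ^ 3 * ((of_nat n * of_nat (m + 1) ^ 2 * of_nat (n choose k) ^ 2
      * of_nat ((2 * k) choose k) * of_nat ((2 * m) choose m)) * (- 4 * of_nat (\<Sum>j = 1..h. j ^ (p - 4))))) p 4"
proof -
  define K where "K = (of_nat n * of_nat (m + 1) ^ 2 * of_nat (n choose k) ^ 2
      * of_nat ((2 * k) choose k) * of_nat ((2 * m) choose m) :: rat)"
  have "p - 1 = 2 * h" "2 * h + 1 = p" using assms(2) by simp_all
  then have pairs: "of_nat (\<Sum>j = 1..p - 1. summand p n k j)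
      = (\<Sum>j = 1..h. of_nat (summand p n k j) + of_nat (summand p n k (p - j)) :: rat)"
    using sum_upto_double_reflect[of "\<lambda>j. of_nat (summand p n k j) :: rat" h] by simp
  have "rat_cong (\<Sum>j = 1..h. of_nat (summand p n k j) + of_nat (summand p n k (p - j)))
      (\<Sum>j = 1..h. of_nat p ^ 3 * (- 4 * K * of_nat j ^ (p - 4))) p 4"
    unfolding K_def using assms by (intro rat_cong_sum[OF prime_p] summand_pair_cong) auto
  moreover have "(\<Sum>j = 1..h. of_nat p ^ 3 * (- 4 * K * of_nat j ^ (p - 4)))
      = of_nat p ^ 3 * (K * (- 4 * of_nat (\<Sum>j = 1..h. j ^ (p - 4))))"
    by (simp add: sum_distrib_left mult_ac)
  ultimately show ?thesis unfolding pairs K_def by simp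
qed

end

theorem mainTheorem6:
  fixes p n k :: nat
  assumes "prime p" and "p \<ge> 5" and "n > k"
  shows "rat_cong
    (of_nat (\<Sum>j = 1..p - 1. ((n * p) choose (k * p + j))^2
        * ((2 * k * p + 2 * j) choose (k * p + j))
        * ((2 * n * p - 2 * k * p - 2 * j) choose (n * p - k * p - j))))
    (8 * of_nat p ^ 3 * bernoulli (p - 3) * of_nat n * of_nat (n - k) ^ 2
        * of_nat (n choose k) ^ 2 * of_nat ((2 * k) choose k)
        * of_nat ((2 * n - 2 * k - 2) choose (n - k - 1)))
    p 4"
proof -
  have "odd p" using prime_odd_nat[OF assms(1)] assms(2) by simp
  then obtain h where h: "p = 2 * h + 1" by (rule oddE)
  define m where "m = n - k - 1"
  have n: "n = k + m + 1" "n - k = m + 1" "2 * n - 2 * k - 2 = 2 * m"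
    using assms(3) by (simp_all add: m_def)
  define K where "K = (of_nat n * of_nat (m + 1) ^ 2 * of_nat (n choose k) ^ 2
      * of_nat ((2 * k) choose k) * of_nat ((2 * m) choose m) :: rat)"
  have "rat_cong (K * (- 4 * of_nat (\<Sum>j = 1..h. j ^ (p - 4)))) (K * (8 * bernoulli (p - 3))) p 1"
    using rat_cong_sym[OF assms(1) bernoulli_p_minus_3_cong[OF assms(1,2) h]] unfolding K_def
    by (rule rat_cong_mult_left[OF assms(1)])
      (intro p_integral_intros[OF assms(1)])
  then have "rat_cong (of_nat p ^ 3 * (K * (- 4 * of_nat (\<Sum>j = 1..h. j ^ (p - 4)))))
      (of_nat p ^ 3 * (K * (8 * bernoulli (p - 3)))) p 4"
    by (rule rat_cong_mult_p_power[OF assms(1)]) simp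
  with summand_sum_cong[OF assms(1,2) h n(1)]
  have "rat_cong (of_nat (\<Sum>j = 1..p - 1. summand p n k j)) (of_nat p ^ 3 * (K * (8 * bernoulli (p - 3)))) p 4"
    unfolding K_def by (rule rat_cong_trans[OF assms(1)])
  then show ?thesis
    unfolding summand_def K_def n(2,3) by (simp add: algebra_simps)
qed

end
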